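(* Let $0<\alpha<d$, $\mathcal{B}_\alpha\in\{\mathcal{B}^c_\alpha,\mathcal{B}^u_\alpha\}$ and $f\in L^1_{\mathrm{loc}}(\mathbb{R}^d)$. Then for each $B\in\mathcal{B}_\alpha$ we have $f_{Q_B}\sim f_B$ and $\ell(Q_B)\sim r(B)$, i.e. $C^{-1}f_B\le f_{Q_B}\le Cf_B$ and $C^{-1}r(B)\le \ell(Q_B)\le C r(B)$ with a constant $C$ depending only on $d$.
   Context: $f_B=\frac1{|B|}\int_B|f|$ for a ball or cube $B$; $r(B)$ is the radius of a ball, $\ell(Q)$ the sidelength of a cube, $\overline B$ the closure. Fix $3^d$ (translated) dyadic grids $\mathcal{D}_1,\dots,\mathcal{D}_{3^d}$ such that every ball $B$ is contained in some cube of $\mathcal{D}=\mathcal{D}_1\cup\dots\cup\mathcal{D}_{3^d}$ of sidelength at most $C_d\,r(B)$; for each ball $B$ let $Q_B$ be such a cube. $\mathrm{M}^c_\alpha f(x)=\sup_{r>0}r^\alpha f_{B(x,r)}$, $\mathrm{M}^u_\alpha f(x)=\sup_{B\ni x}r(B)^\alpha f_B$. $\mathcal{B}^c_\alpha(x)=\{B(x,r)\}$ with $r$ the largest radius with $\mathrm{M}^c_\alpha f(x)=r^\alpha f_{B(x,r)}$; $\mathcal{B}^u_\alpha(x)$ is the set of balls $B$ with $x\in\overline B$, $r(B)^\alpha f_B=\mathrm{M}^u_\alpha f(x)$ and $r(A)^\alpha f_A<\mathrm{M}^u_\alpha f(x)$ for all balls $A\supsetneq B$. $\mathcal{B}^c_\alpha=\bigcup_x\mathcal{B}^c_\alpha(x)$,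 $\mathcal{B}^u_\alpha=\bigcup_x\mathcal{B}^u_\alpha(x)$. *)

theory Defs
  imports "HOL-Analysis.Analysis"
begin

text \<open>Cubes are represented by pairs (lower corner,
  sidelength); the cube itself is the half-open cube.\<close>

definition cube_set :: "('a::euclidean_space \<times> real) \<Rightarrow> 'a set" where
  "cube_set Q = {x. \<forall>i\<in>Basis. fst Q \<bullet> i \<le> x \<bullet> i \<and> x \<bullet> i < fst Q \<bullet> i + snd Q}"

definition ball_set :: "('a::euclidean_space \<times> real) \<Rightarrow> 'a set" where
  "ball_set B = ball (fst B) (snd B)"

definition is_ball :: "('a::euclidean_space \<times> real) \<Rightarrow> bool" where
  "is_ball B \<longleftrightarrow> snd B > 0"

definition dyadic_grid :: "('a::euclidean_space \<times> real) set \<Rightarrow> bool" where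
  "dyadic_grid G \<longleftrightarrow>
     (\<forall>Q\<in>G. \<exists>k::int. snd Q = 2 powr (real_of_int k)) \<and>
     (\<forall>k::int. \<forall>x. \<exists>!Q. Q \<in> G \<and> snd Q = 2 powr (real_of_int k) \<and> x \<in> cube_set Q) \<and>
     (\<forall>Q\<in>G. \<forall>R\<in>G. cube_set Q \<inter> cube_set R = {} \<or> cube_set Q \<subseteq> cube_set R \<or> cube_set R \<subseteq> cube_set Q)"

definition locally_integrable :: "('a::euclidean_space \<Rightarrow> real) \<Rightarrow> bool" where
  "locally_integrable f \<longleftrightarrow> (\<forall>K. compact K \<longrightarrow> set_integrable lebesgue K f)"

definition avg :: "('a::euclidean_space \<Rightarrow> real) \<Rightarrow> 'a set \<Rightarrow> real" where
  "avg f S = (LINT y:S|lebesgue. \<bar>f y\<bar>) / measure lebesgue S"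

definition Mc :: "real \<Rightarrow> ('a::euclidean_space \<Rightarrow> real) \<Rightarrow> 'a \<Rightarrow> ereal" where
  "Mc \<alpha> f x = (SUP r\<in>{0<..}. ereal (r powr \<alpha> * avg f (ball x r)))"

definition Mu :: "real \<Rightarrow> ('a::euclidean_space \<Rightarrow> real) \<Rightarrow> 'a \<Rightarrow> ereal" where
  "Mu \<alpha> f x = (SUP B\<in>{B. is_ball B \<and> x \<in> ball_set B}. ereal (snd B powr \<alpha> * avg f (ball_set B)))"

definition Bc_at :: "real \<Rightarrow> ('a::euclidean_space \<Rightarrow> real) \<Rightarrow> 'a \<Rightarrow> ('a \<times> real) set" where
  "Bc_at \<alpha> f x = {(x, r) | r. r > 0 \<and> Mc \<alpha> f x = ereal (r powr \<alpha> * avg f (ball x r)) \<and>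
       (\<forall>s>0. Mc \<alpha> f x = ereal (s powr \<alpha> * avg f (ball x s)) \<longrightarrow> s \<le> r)}"

definition Bu_at :: "real \<Rightarrow> ('a::euclidean_space \<Rightarrow> real) \<Rightarrow> 'a \<Rightarrow> ('a \<times> real) set" where
  "Bu_at \<alpha> f x = {B. is_ball B \<and> x \<in> closure (ball_set B) \<and>
       Mu \<alpha> f x = ereal (snd B powr \<alpha> * avg f (ball_set B)) \<and>
       (\<forall>A. is_ball A \<and> ball_set B \<subset> ball_set A \<longrightarrow>
            ereal (snd A powr \<alpha> * avg f (ball_set A)) < Mu \<alpha> f x)}"

definition Bc :: "real \<Rightarrow> ('a::euclidean_space \<Rightarrow> real) \<Rightarrow> ('a \<times> real) set" where
  "Bc \<alpha> f = (\<Union>x. Bc_at \<alpha> f x)"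

definition Bu :: "real \<Rightarrow> ('a::euclidean_space \<Rightarrow> real) \<Rightarrow> ('a \<times> real) set" where
  "Bu \<alpha> f = (\<Union>x. Bu_at \<alpha> f x)"

end

theory Submission
  imports Defs
begin

text \<open>Let \<open>B\<close> be extremal at a point \<open>x\<close> of its closure, so that \<open>r(B)\<^sup>\<alpha> f\<^sub>B\<close> dominates
  \<open>R\<^sup>\<alpha> f\<^bsub>B(x,R)\<^esub>\<close> for every \<open>R > 0\<close>, and let \<open>Q = Q\<^sub>B\<close>.  Since \<open>B \<subseteq> Q\<close> we have
  \<open>2 r(B) \<le> \<ell>(Q) \<le> C\<^sub>d r(B)\<close>, and comparing the integrals of \<open>|f|\<close> over \<open>B \<subseteq> Q\<close> gives
  \<open>f\<^sub>B \<lesssim> f\<^sub>Q\<close>.  Conversely \<open>Q\<close> lies in the ball \<open>A = B(x, 2d\<ell>(Q))\<close>, whose volume is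
  comparable to that of \<open>Q\<close>, so \<open>f\<^sub>Q \<lesssim> f\<^sub>A\<close>; as \<open>r(A) \<ge> r(B)\<close> and \<open>\<alpha> \<ge> 0\<close>,
  extremality gives \<open>f\<^sub>A \<le> f\<^sub>B\<close>.\<close>

lemma box_subset_cube_set: "box a (a + l *\<^sub>R One) \<subseteq> cube_set (a, l)"
  unfolding cube_set_def by (auto simp: mem_box inner_add_left less_imp_le)

lemma cube_set_subset_cbox: "cube_set (a, l) \<subseteq> cbox a (a + l *\<^sub>R One)"
proof
  fix x assume "x \<in> cube_set (a, l)"
  then show "x \<in> cbox a (a + l *\<^sub>R One)"
    unfolding cube_set_def by (auto simp: mem_box inner_add_left dest!: bspec intro: less_imp_le)
qed

lemma convex_cube_set: "convex (cube_set Q)"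
proof -
  have "cube_set Q = (\<Inter>i\<in>Basis. {x. i \<bullet> x \<ge> fst Q \<bullet> i} \<inter> {x. i \<bullet> x < fst Q \<bullet> i + snd Q})"
    unfolding cube_set_def by (auto simp: inner_commute)
  then show ?thesis
    by (auto intro!: convex_INT convex_Int convex_halfspace_ge convex_halfspace_lt)
qed

lemma bounded_cube_set: "bounded (cube_set (a, l))"
  using cube_set_subset_cbox bounded_cbox bounded_subset by blast

lemma cube_set_lmeasurable: "cube_set (a, l) \<in> lmeasurable"
  by (intro measurable_convex convex_cube_set bounded_cube_set)

lemma measure_cube_set:
  fixes a :: "'a::euclidean_space"
  assumes "0 \<le> l"
  shows "measure lebesgue (cube_set (a, l)) = l ^ DIM('a)"
proof -
  have content: "(\<Prod>i\<in>(Basis::'a set). (a + l *\<^sub>R One - a) \<bullet> i) = l ^ DIM('a)"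
    by (simp add: prod_constant)
  have "measure lebesgue (box a (a + l *\<^sub>R One)) \<le> measure lebesgue (cube_set (a, l))"
    by (intro measure_mono_fmeasurable box_subset_cube_set cube_set_lmeasurable) auto
  moreover have "measure lebesgue (cube_set (a, l)) \<le> measure lebesgue (cbox a (a + l *\<^sub>R One))"
    by (intro measure_mono_fmeasurable cube_set_subset_cbox) (auto simp: cube_set_lmeasurable fmeasurableD)
  moreover have "measure lborel (box a (a + l *\<^sub>R One)) = l ^ DIM('a)"
    "measure lborel (cbox a (a + l *\<^sub>R One)) = l ^ DIM('a)"
    using assms by (simp_all add: inner_add_left content)
  ultimately show ?thesis by simp
qed

lemma measure_ball_eq_unit_ball:
  fixes c :: "'a::euclidean_space"
  assumes "0 \<le> r"
  shows "measure lebesgue (ball c r) = r ^ DIM('a) * measure lebesgue (ball (0::'a) 1)"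
  using content_ball_conv_unit_ball[OF assms] by simp

lemma measure_unit_ball_pos: "0 < measure lebesgue (ball (0::'a::euclidean_space) 1)"
  using content_ball_pos[of 1 "0::'a"] by simp

lemma ball_subset_cube_set_diameter_le:
  assumes sub: "ball c r \<subseteq> cube_set (a, l)" and "0 < r"
  shows "2 * r \<le> l"
proof (rule dense_le)
  fix s assume "s < 2 * r"
  obtain i where i: "i \<in> (Basis :: 'a set)" using nonempty_Basis by blast
  define t where "t = max (s / 2) (r / 2)"
  have "0 < t" "t < r" "s \<le> 2 * t"
    using \<open>0 < r\<close> \<open>s < 2 * r\<close> by (auto simp: t_def)
  then have "c - t *\<^sub>R i \<in> cube_set (a, l)" "c + t *\<^sub>R i \<in> cube_set (a, l)"
    using sub i by (auto simp: dist_norm intro!: subsetD[OF sub])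
  then have "a \<bullet> i \<le> c \<bullet> i - t" "c \<bullet> i + t < a \<bullet> i + l"
    using i unfolding cube_set_def by (auto simp: inner_diff_left inner_add_left dest!: bspec)
  then show "s \<le> l" using \<open>s \<le> 2 * t\<close> by linarith
qed

lemma cube_set_subset_ball:
  fixes a :: "'a::euclidean_space" and l :: real
  assumes x: "x \<in> closure (cube_set (a, l))" and "0 < l"
  shows "cube_set (a, l) \<subseteq> ball x (2 * real DIM('a) * l)"
proof
  fix y assume "y \<in> cube_set (a, l)"
  moreover have "x \<in> cbox a (a + l *\<^sub>R One)"
    using x cube_set_subset_cbox closed_cbox closure_minimal by blast
  ultimately have "\<bar>(x - y) \<bullet> i\<bar> \<le> l" if "i \<in> Basis" for i
    using cube_set_subset_cbox that by (force simp: mem_box inner_diff_left inner_add_left)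
  then have "norm (x - y) \<le> DIM('a) * l"
    using norm_le_l1[of "x - y"] sum_mono[of Basis "\<lambda>i. \<bar>(x - y) \<bullet> i\<bar>" "\<lambda>_. l"] by simp
  moreover have "0 < DIM('a) * l" using \<open>0 < l\<close> by simp
  ultimately show "y \<in> ball x (2 * real DIM('a) * l)"
    by (simp add: dist_norm)
qed

lemma locally_integrable_set_integrable:
  assumes "locally_integrable f" "bounded S" "S \<in> sets lebesgue"
  shows "set_integrable lebesgue S f"
  using assms closure_subset compact_closure set_integrable_subset
  unfolding locally_integrable_def by metis

lemma avg_nonneg: "0 \<le> avg f S"
  unfolding avg_def set_lebesgue_integral_def by (auto intro: divide_nonneg_nonneg)

lemma set_integral_abs_mono_set:
  fixes f :: "'a::euclidean_space \<Rightarrow> real"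
  assumes "set_integrable lebesgue T f" "S \<in> sets lebesgue" "S \<subseteq> T"
  shows "(LINT y:S|lebesgue. \<bar>f y\<bar>) \<le> (LINT y:T|lebesgue. \<bar>f y\<bar>)"
proof -
  have T: "set_integrable lebesgue T (\<lambda>y. \<bar>f y\<bar>)" using set_integrable_abs[OF assms(1)] .
  have S: "set_integrable lebesgue S (\<lambda>y. \<bar>f y\<bar>)" using set_integrable_subset[OF T assms(2,3)] .
  show ?thesis
    using T S assms(3) unfolding set_integrable_def set_lebesgue_integral_def
    by (intro integral_mono) (auto split: split_indicator)
qed

lemma avg_le_measure_ratio_avg:
  fixes f :: "'a::euclidean_space \<Rightarrow> real"
  assumes "set_integrable lebesgue T f" "S \<in> sets lebesgue" "S \<subseteq> T" "T \<in> lmeasurable"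
    and "0 < measure lebesgue S"
  shows "avg f S \<le> measure lebesgue T / measure lebesgue S * avg f T"
proof -
  have "measure lebesgue S \<le> measure lebesgue T"
    using assms(2-4) by (intro measure_mono_fmeasurable) (auto simp: fmeasurableD)
  then have "0 < measure lebesgue T" using assms(5) by linarith
  then have "measure lebesgue T / measure lebesgue S * avg f T
      = (LINT y:T|lebesgue. \<bar>f y\<bar>) / measure lebesgue S"
    unfolding avg_def by simp
  then show ?thesis
    unfolding avg_def using set_integral_abs_mono_set[OF assms(1-3)] assms(5)
    by (simp add: divide_right_mono)
qed

lemma avg_ball_le_avg_cube_set:
  fixes f :: "'a::euclidean_space \<Rightarrow> real"
  assumes f: "locally_integrable f" and "0 < r"
    and sub: "ball c r \<subseteq> cube_set (a, l)" and l: "l \<le> K * r"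
  shows "avg f (ball c r) \<le> K ^ DIM('a) / measure lebesgue (ball (0::'a) 1) * avg f (cube_set (a, l))"
proof -
  define \<omega> where "\<omega> = measure lebesgue (ball (0::'a) 1)"
  have "0 < \<omega>" unfolding \<omega>_def by (rule measure_unit_ball_pos)
  have "0 \<le> l" using ball_subset_cube_set_diameter_le[OF sub \<open>0 < r\<close>] \<open>0 < r\<close> by linarith
  have ball: "measure lebesgue (ball c r) = r ^ DIM('a) * \<omega>"
    unfolding \<omega>_def using measure_ball_eq_unit_ball[of r c] \<open>0 < r\<close> by simp
  have "set_integrable lebesgue (cube_set (a, l)) f"
    by (intro locally_integrable_set_integrable[OF f] bounded_cube_set fmeasurableD cube_set_lmeasurable)
  then have "avg f (ball c r) \<le> l ^ DIM('a) / (r ^ DIM('a) * \<omega>) * avg f (cube_set (a, l))"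
    using avg_le_measure_ratio_avg[OF _ _ sub cube_set_lmeasurable] \<open>0 \<le> l\<close> \<open>0 < r\<close> \<open>0 < \<omega>\<close>
    by (simp add: ball measure_cube_set)
  also have "\<dots> \<le> (K * r) ^ DIM('a) / (r ^ DIM('a) * \<omega>) * avg f (cube_set (a, l))"
    using \<open>0 \<le> l\<close> \<open>0 < r\<close> \<open>0 < \<omega>\<close> l
    by (intro mult_right_mono divide_right_mono power_mono avg_nonneg) auto
  also have "\<dots> = K ^ DIM('a) / \<omega> * avg f (cube_set (a, l))"
    using \<open>0 < r\<close> by (simp add: power_mult_distrib)
  finally show ?thesis unfolding \<omega>_def .
qed

definition dominates_centred_balls :: "real \<Rightarrow> ('a::euclidean_space \<Rightarrow> real) \<Rightarrow> 'a \<Rightarrow> 'a \<times> real \<Rightarrow> bool"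
  where "dominates_centred_balls \<alpha> f x B \<longleftrightarrow>
    (\<forall>R>0. R powr \<alpha> * avg f (ball x R) \<le> snd B powr \<alpha> * avg f (ball_set B))"

lemma avg_cube_set_le_avg_dominating_ball:
  fixes f :: "'a::euclidean_space \<Rightarrow> real"
  assumes f: "locally_integrable f" and "0 \<le> \<alpha>" and "0 < r"
    and sub: "ball c r \<subseteq> cube_set (a, l)" and x: "x \<in> closure (ball c r)"
    and dom: "dominates_centred_balls \<alpha> f x (c, r)"
  shows "avg f (cube_set (a, l))
    \<le> measure lebesgue (ball (0::'a) 1) * (2 * real DIM('a)) ^ DIM('a) * avg f (ball c r)"
proof -
  define \<omega> where "\<omega> = measure lebesgue (ball (0::'a) 1)"
  define R where "R = 2 * real DIM('a) * l"
  have "0 < \<omega>" unfolding \<omega>_def by (rule measure_unit_ball_pos)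
  have "2 * r \<le> l" using ball_subset_cube_set_diameter_le[OF sub \<open>0 < r\<close>] .
  then have "0 < l" using \<open>0 < r\<close> by linarith
  have "l \<le> DIM('a) * l"
    using \<open>0 < l\<close> DIM_positive[where 'a='a] by (simp add: Suc_le_eq)
  then have "r \<le> R" unfolding R_def using \<open>2 * r \<le> l\<close> \<open>0 < r\<close> by linarith
  then have "0 < R" using \<open>0 < r\<close> by linarith
  have "cube_set (a, l) \<subseteq> ball x R"
    unfolding R_def using closure_mono[OF sub] x \<open>0 < l\<close> cube_set_subset_ball by blast
  moreover have "set_integrable lebesgue (ball x R) f"
    by (intro locally_integrable_set_integrable[OF f]) auto
  moreover have "measure lebesgue (ball x R) = R ^ DIM('a) * \<omega>"
    unfolding \<omega>_def using measure_ball_eq_unit_ball[of R x] \<open>0 < R\<close> by simp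
  ultimately have "avg f (cube_set (a, l)) \<le> R ^ DIM('a) * \<omega> / l ^ DIM('a) * avg f (ball x R)"
    using avg_le_measure_ratio_avg[of "ball x R" f "cube_set (a, l)"] \<open>0 < l\<close>
    by (simp add: measure_cube_set fmeasurableD cube_set_lmeasurable)
  also have "\<dots> = \<omega> * (2 * real DIM('a)) ^ DIM('a) * avg f (ball x R)"
    using \<open>0 < l\<close> by (simp add: R_def power_mult_distrib)
  also have "\<dots> \<le> \<omega> * (2 * real DIM('a)) ^ DIM('a) * avg f (ball c r)"
  proof -
    have "R powr \<alpha> * avg f (ball x R) \<le> r powr \<alpha> * avg f (ball c r)"
      using dom \<open>0 < R\<close> by (simp add: dominates_centred_balls_def ball_set_def)
    also have "\<dots> \<le> R powr \<alpha> * avg f (ball c r)"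
      using \<open>0 \<le> \<alpha>\<close> \<open>0 < r\<close> \<open>r \<le> R\<close> by (intro mult_right_mono powr_mono2 avg_nonneg) auto
    finally show ?thesis using \<open>0 < R\<close> \<open>0 < \<omega>\<close> by simp
  qed
  finally show ?thesis unfolding \<omega>_def .
qed

lemma Bc_dominates_centred_balls:
  assumes "B \<in> Bc \<alpha> f"
  obtains x where "is_ball B" "x \<in> closure (ball_set B)" "dominates_centred_balls \<alpha> f x B"
proof -
  obtain x r where B: "B = (x, r)" "0 < r" and M: "Mc \<alpha> f x = ereal (r powr \<alpha> * avg f (ball x r))"
    using assms unfolding Bc_def Bc_at_def by blast
  have "ereal (R powr \<alpha> * avg f (ball x R)) \<le> Mc \<alpha> f x" if "0 < R" for R
    unfolding Mc_def by (rule SUP_upper) (use that in auto)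
  then have "dominates_centred_balls \<alpha> f x B"
    using M by (simp add: dominates_centred_balls_def B ball_set_def)
  moreover have "x \<in> closure (ball_set B)"
    using B closure_subset by (force simp: ball_set_def)
  ultimately show thesis using that B by (simp add: is_ball_def)
qed

lemma Bu_dominates_centred_balls:
  assumes "B \<in> Bu \<alpha> f"
  obtains x where "is_ball B" "x \<in> closure (ball_set B)" "dominates_centred_balls \<alpha> f x B"
proof -
  obtain x where B: "is_ball B" "x \<in> closure (ball_set B)"
    and M: "Mu \<alpha> f x = ereal (snd B powr \<alpha> * avg f (ball_set B))"
    using assms unfolding Bu_def Bu_at_def by blast
  have "ereal (snd (x, R) powr \<alpha> * avg f (ball_set (x, R))) \<le> Mu \<alpha> f x" if "0 < R" for R
    unfolding Mu_def by (rule SUP_upper) (use that in \<open>auto simp: is_ball_def ball_set_def\<close>)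
  then have "dominates_centred_balls \<alpha> f x B"
    using M by (simp add: dominates_centred_balls_def ball_set_def)
  then show thesis using that B by blast
qed

lemma extremal_ball_cube_set_comparable:
  fixes f :: "'a::euclidean_space \<Rightarrow> real"
  assumes f: "locally_integrable f" and "0 \<le> \<alpha>" and B: "B \<in> Bc \<alpha> f \<or> B \<in> Bu \<alpha> f"
    and sub: "ball_set B \<subseteq> cube_set Q" and side: "snd Q \<le> K * snd B"
    and C: "1 \<le> C" "K \<le> C" "K ^ DIM('a) / measure lebesgue (ball (0::'a) 1) \<le> C"
      "measure lebesgue (ball (0::'a) 1) * (2 * real DIM('a)) ^ DIM('a) \<le> C"
  shows "inverse C * avg f (ball_set B) \<le> avg f (cube_set Q)"
    and "avg f (cube_set Q) \<le> C * avg f (ball_set B)"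
    and "inverse C * snd B \<le> snd Q" and "snd Q \<le> C * snd B"
proof -
  obtain x where "is_ball B" "x \<in> closure (ball_set B)" "dominates_centred_balls \<alpha> f x B"
    using B Bc_dominates_centred_balls Bu_dominates_centred_balls by metis
  moreover obtain c r a l where BQ: "B = (c, r)" "Q = (a, l)" by fastforce
  ultimately have "0 < r" and sub: "ball c r \<subseteq> cube_set (a, l)" and "l \<le> K * r"
    and x: "x \<in> closure (ball c r)" and dom: "dominates_centred_balls \<alpha> f x (c, r)"
    using sub side by (auto simp: is_ball_def ball_set_def)
  have "avg f (ball c r) \<le> C * avg f (cube_set (a, l))"
    using avg_ball_le_avg_cube_set[OF f \<open>0 < r\<close> sub \<open>l \<le> K * r\<close>] C(3)
    by (meson avg_nonneg mult_right_mono order_trans)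
  then show "inverse C * avg f (ball_set B) \<le> avg f (cube_set Q)"
    using C(1) by (simp add: BQ ball_set_def field_simps)
  show "avg f (cube_set Q) \<le> C * avg f (ball_set B)"
    using avg_cube_set_le_avg_dominating_ball[OF f \<open>0 \<le> \<alpha>\<close> \<open>0 < r\<close> sub x dom] C(4)
    by (simp add: BQ ball_set_def) (meson avg_nonneg mult_right_mono order_trans)
  have "inverse C * r \<le> r"
    using C(1) \<open>0 < r\<close> mult_right_mono[of "inverse C" 1 r] by (simp add: inverse_le_1_iff)
  then show "inverse C * snd B \<le> snd Q"
    unfolding BQ snd_conv using ball_subset_cube_set_diameter_le[OF sub \<open>0 < r\<close>] \<open>0 < r\<close>
    by linarith
  show "snd Q \<le> C * snd B"
    unfolding BQ snd_conv using C(2) \<open>0 < r\<close> \<open>l \<le> K * r\<close> mult_right_mono[of K C r] by linarith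
qed

theorem lemma4p2:
  fixes T :: "nat \<Rightarrow> ('a::euclidean_space \<times> real) set" and Cd :: real
  assumes grids: "\<forall>i<3 ^ DIM('a). dyadic_grid (T i)"
    and cover: "\<forall>B. is_ball B \<longrightarrow>
       (\<exists>Q\<in>(\<Union>i<3 ^ DIM('a). T i). ball_set B \<subseteq> cube_set Q \<and> snd Q \<le> Cd * snd B)"
  shows "\<exists>C>0. \<forall>(\<alpha>::real) (f::'a \<Rightarrow> real) QB B.
     0 < \<alpha> \<and> \<alpha> < real DIM('a) \<and> locally_integrable f \<and>
     (\<forall>A. is_ball A \<longrightarrow> QB A \<in> (\<Union>i<3 ^ DIM('a). T i) \<and>
          ball_set A \<subseteq> cube_set (QB A) \<and> snd (QB A) \<le> Cd * snd A) \<and>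
     (B \<in> Bc \<alpha> f \<or> B \<in> Bu \<alpha> f)
     \<longrightarrow> inverse C * avg f (ball_set B) \<le> avg f (cube_set (QB B)) \<and>
         avg f (cube_set (QB B)) \<le> C * avg f (ball_set B) \<and>
         inverse C * snd B \<le> snd (QB B) \<and> snd (QB B) \<le> C * snd B"
proof -
  define \<omega> where "\<omega> = measure lebesgue (ball (0::'a) 1)"
  define C where "C = max (max 1 Cd) (max (Cd ^ DIM('a) / \<omega>) (\<omega> * (2 * real DIM('a)) ^ DIM('a)))"
  have "0 < C" unfolding C_def by simp
  moreover have "1 \<le> C" "Cd \<le> C" "Cd ^ DIM('a) / \<omega> \<le> C" "\<omega> * (2 * real DIM('a)) ^ DIM('a) \<le> C"
    unfolding C_def by simp_all
  ultimately show ?thesis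
    unfolding \<omega>_def using extremal_ball_cube_set_comparable[where K = Cd and C = C]
    by (metis is_ball_def Bc_dominates_centred_balls Bu_dominates_centred_balls less_imp_le)
qed

end
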